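(* Let $\Omega\subseteq\mathbb{R}^N$ be a domain satisfying Condition (D). For every $\lambda\in(0,1)$ there exists a constant $C>0$ depending only on $\Omega$ and $\lambda$ such that for every $u\in C^\infty(\overline\Omega)$ with $\lim_{x\in\Omega,|x|\to+\infty}u(x)=0$, $$\int_{\partial\Omega}\exp(\lambda|u|^2)\,\varphi\,dS\le C\exp\!\Big[\big(\|\nabla u\|_{L^\infty(\Omega)}+\|u\|_{L^\infty(\Omega)}\big)^2\Big]\Big(\|\nabla u\|_{L^\infty(\Omega)}\big(\|\nabla u\|_{L^\infty(\Omega)}+\|u\|_{L^\infty(\Omega)}\big)+1\Big).$$
   Context: $\varphi(x)=(2\pi)^{-N/2}e^{-|x|^2/2}$; $dS$ denotes the $(N-1)$-dimensional Hausdorff (surface) measure on $\partial\Omega$. Condition (D) on a domain $\Omega\subseteq\mathbb{R}^N$: there exist $m\in\mathbb{N}$ orthonormal coordinate systems $X_r=(x_r',x_r^N)$, $r=1,\dots,m$; numbers $a_i,b_i\in\mathbb{R}\cup\{\pm\infty\}$ defining $\Delta_r=\{x_r': x_r^i\in(a_i,b_i),\ i=1,\dots,N-1\}$; Lipschitz functions $a_r$ on $\overline{\Delta_r}$; and $\beta>0$ such that $\Lambda_r=\{(x_r',a_r(x_r')): x_r'\in\Delta_r\}\subseteq\partial\Omega$, $\partial\Omega=\bigcup_r\Lambda_r$, $\{(x_r',x_r^N): x_r'\in\Delta_r,\ a_r(x_r')<x_r^N<a_r(x_r')+\beta\}\subseteq\Omega$, and $\{(x_r',x_r^N): x_r'\in\Delta_r,\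 a_r(x_r')-\beta<x_r^N<a_r(x_r')\}$ lies outside $\overline\Omega$. *)

theory Defs
  imports "HOL-Analysis.Analysis"
begin

definition gauss_density :: "'a::euclidean_space \<Rightarrow> real" where
  "gauss_density x = (2 * pi) powr (- real DIM('a) / 2) * exp (- (norm x)\<^sup>2 / 2)"

definition hausdorff_const :: "nat \<Rightarrow> real" where
  "hausdorff_const s = pi powr (real s / 2) / Gamma (real s / 2 + 1) / 2 ^ s"

definition hausdorff_approx :: "nat \<Rightarrow> real \<Rightarrow> 'a::metric_space set \<Rightarrow> ennreal" where
  "hausdorff_approx s \<delta> A =
     (INF C \<in> {C :: nat \<Rightarrow> 'a set. A \<subseteq> (\<Union>n. C n) \<and> (\<forall>n. bounded (C n) \<and> diameter (C n) \<le> \<delta>)}.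
        (\<Sum>n. ennreal (if C n = {} then 0 else hausdorff_const s * diameter (C n) ^ s)))"

definition hausdorff_outer :: "nat \<Rightarrow> 'a::metric_space set \<Rightarrow> ennreal" where
  "hausdorff_outer s A = (SUP \<delta> \<in> {0<..}. hausdorff_approx s \<delta> A)"

definition hausdorff_measure :: "nat \<Rightarrow> 'a::metric_space measure" where
  "hausdorff_measure s = measure_of UNIV
     {A. \<forall>X. hausdorff_outer s X = hausdorff_outer s (X \<inter> A) + hausdorff_outer s (X - A)}
     (hausdorff_outer s)"

fun C_k_on :: "nat \<Rightarrow> 'a::euclidean_space set \<Rightarrow> ('a \<Rightarrow> real) \<Rightarrow> bool" where
  "C_k_on 0 U f = continuous_on U f"
| "C_k_on (Suc k) U f = (\<exists>f'. (\<forall>x\<in>U. (f has_derivative f' x) (at x)) \<and> (\<forall>v. C_k_on k U (\<lambda>x. f' x v)))"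

definition smooth_on :: "'a::euclidean_space set \<Rightarrow> ('a \<Rightarrow> real) \<Rightarrow> bool" where
  "smooth_on U f \<longleftrightarrow> open U \<and> (\<forall>k. C_k_on k U f)"

text \<open>u in C^infinity of the closure of Omega: restriction of a function smooth on an open
  neighbourhood of the closure.\<close>
definition smooth_on_closure :: "'a::euclidean_space set \<Rightarrow> ('a \<Rightarrow> real) \<Rightarrow> bool" where
  "smooth_on_closure \<Omega> u \<longleftrightarrow> (\<exists>U. closure \<Omega> \<subseteq> U \<and> smooth_on U u)"

definition grad :: "('a::euclidean_space \<Rightarrow> real) \<Rightarrow> 'a \<Rightarrow> 'a" where
  "grad u x = (\<Sum>b\<in>Basis. frechet_derivative u (at x) b *\<^sub>R b)"

definition domain :: "'a::euclidean_space set \<Rightarrow> bool" where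
  "domain \<Omega> \<longleftrightarrow> open \<Omega> \<and> connected \<Omega> \<and> \<Omega> \<noteq> {}"

text \<open>Local base \<Delta> (in the hyperplane orthogonal to the distinguished basis vector e,
  which plays the role of the N-th coordinate axis).\<close>
definition base_box :: "'a::euclidean_space \<Rightarrow> ('a \<Rightarrow> ereal) \<Rightarrow> ('a \<Rightarrow> ereal) \<Rightarrow> 'a set" where
  "base_box e lo hi = {y. y \<bullet> e = 0 \<and> (\<forall>b\<in>Basis - {e}. lo b < ereal (y \<bullet> b) \<and> ereal (y \<bullet> b) < hi b)}"

text \<open>Coordinate system r: local coordinates (y, t) correspond to the point c r + T r (y + t e).\<close>
definition condition_D :: "'a::euclidean_space set \<Rightarrow> bool" where
  "condition_D \<Omega> \<longleftrightarrow>
    (\<exists>m::nat. \<exists>c T. \<exists>e\<in>Basis. \<exists>lo hi. \<exists>a :: nat \<Rightarrow> 'a \<Rightarrow> real. \<exists>\<beta>>0.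
      (\<forall>r<m. orthogonal_transformation (T r)
        \<and> (\<exists>L. L-lipschitz_on (closure (base_box e lo hi)) (a r))
        \<and> {c r + T r (y + a r y *\<^sub>R e) | y. y \<in> base_box e lo hi} \<subseteq> frontier \<Omega>
        \<and> {c r + T r (y + t *\<^sub>R e) | y t. y \<in> base_box e lo hi \<and> a r y < t \<and> t < a r y + \<beta>} \<subseteq> \<Omega>
        \<and> {c r + T r (y + t *\<^sub>R e) | y t. y \<in> base_box e lo hi \<and> a r y - \<beta> < t \<and> t < a r y}
            \<inter> closure \<Omega> = {})
      \<and> frontier \<Omega> = (\<Union>r<m. {c r + T r (y + a r y *\<^sub>R e) | y. y \<in> base_box e lo hi}))"

end

theory Submission
  imports Defs
begin

text \<open>
  Let \<open>M = sup \<bar>u\<bar>\<close> and \<open>G = sup \<bar>grad u\<bar>\<close> over \<open>\<Omega>\<close>.  On the boundary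
  \<open>\<bar>u\<bar> \<le> M\<close> by continuity, so \<open>exp (lam u\<^sup>2) \<le> exp (lam M\<^sup>2) \<le> exp ((G + M)\<^sup>2)\<close>, and the
  theorem follows once the Gaussian weight has finite surface integral over the
  boundary: \<open>\<integral> exp (-\<bar>x\<bar>\<^sup>2/2) dS < \<infinity>\<close> over \<open>\<partial>\<Omega>\<close>.

  By Condition (D) the boundary is covered by finitely many graphs of
  uniformly Lipschitz functions over one hyperplane.  Covering the part of such a graph
  over a cube of side \<open>2R\<close> by the images of small grid cells shows that the
  (N-1)-dimensional Hausdorff measure of \<open>\<partial>\<Omega> \<inter> cball 0 r\<close> grows at most like \<open>r^(N-1)\<close>.

  For any measure of polynomial growth on \<open>S\<close>, the Gaussian weight has
  finite integral over \<open>S\<close>: the layer where a measurable minorant lies between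
  \<open>exp (-2(k+1))\<close> and \<open>exp (-2k)\<close> (times a constant) sits in the ball of radius \<open>k + 2\<close>,
  so the layers contribute a convergent geometric series.

  Finally, a function continuous on the closure that vanishes at infinity is bounded,
  and its supremum over \<open>\<Omega>\<close> also bounds it on the boundary.
\<close>

lemma hausdorff_const_nonneg: "0 \<le> hausdorff_const s"
  unfolding hausdorff_const_def
  by (intro divide_nonneg_nonneg) (auto intro: less_imp_le Gamma_real_pos)

lemma hausdorff_approx_finite_cover:
  assumes fin: "finite I" and cov: "A \<subseteq> (\<Union>i\<in>I. D i)"
    and small: "\<And>i. i \<in> I \<Longrightarrow> bounded (D i) \<and> diameter (D i) \<le> \<delta>" and "0 \<le> \<delta>"
  shows "hausdorff_approx s \<delta> A \<le> ennreal (\<Sum>i\<in>I. hausdorff_const s * diameter (D i) ^ s)"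
proof -
  obtain h where h: "bij_betw h {0..<card I} I" using ex_bij_betw_nat_finite[OF fin] by blast
  have hI: "\<And>k. k < card I \<Longrightarrow> h k \<in> I" using h by (auto simp: bij_betw_def)
  define C where "C k = (if k < card I then D (h k) else {})" for k
  have C_cover: "C \<in> {C. A \<subseteq> (\<Union>n. C n) \<and> (\<forall>n. bounded (C n) \<and> diameter (C n) \<le> \<delta>)}"
  proof safe
    fix x assume "x \<in> A"
    then obtain i where i: "i \<in> I" "x \<in> D i" using cov by blast
    then obtain k where "k < card I" "h k = i" using h by (force simp: bij_betw_def)
    then show "x \<in> (\<Union>n. C n)" using i by (auto simp: C_def)
  qed (use small hI \<open>0 \<le> \<delta>\<close> in \<open>auto simp: C_def\<close>)
  let ?g = "\<lambda>n. ennreal (if C n = {} then 0 else hausdorff_const s * diameter (C n) ^ s)"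
  have diam_nonneg: "0 \<le> hausdorff_const s * diameter (D (h n)) ^ s" if "n < card I" for n
    using small[OF hI[OF that]] by (simp add: hausdorff_const_nonneg diameter_ge_0)
  have "hausdorff_approx s \<delta> A \<le> (\<Sum>n. ?g n)"
    unfolding hausdorff_approx_def by (rule INF_lower[OF C_cover])
  also have "\<dots> = (\<Sum>n\<in>{0..<card I}. ?g n)"
    by (rule suminf_finite) (auto simp: C_def)
  also have "\<dots> \<le> (\<Sum>n\<in>{0..<card I}. ennreal (hausdorff_const s * diameter (D (h n)) ^ s))"
    by (intro sum_mono) (auto simp: C_def)
  also have "\<dots> = ennreal (\<Sum>n\<in>{0..<card I}. hausdorff_const s * diameter (D (h n)) ^ s)"
    using diam_nonneg by (intro sum_ennreal) auto
  also have "(\<Sum>n\<in>{0..<card I}. hausdorff_const s * diameter (D (h n)) ^ s)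
     = (\<Sum>i\<in>I. hausdorff_const s * diameter (D i) ^ s)"
    using sum.reindex_bij_betw[OF h, of "\<lambda>i. hausdorff_const s * diameter (D i) ^ s"] by simp
  finally show ?thesis .
qed

lemma hausdorff_outer_le:
  assumes "\<And>\<delta>. 0 < \<delta> \<Longrightarrow> hausdorff_approx s \<delta> A \<le> B"
  shows "hausdorff_outer s A \<le> B"
  unfolding hausdorff_outer_def using assms by (auto intro!: SUP_least)

lemma emeasure_hausdorff_le_outer: "emeasure (hausdorff_measure s) X \<le> hausdorff_outer s X"
  unfolding hausdorff_measure_def emeasure_measure_of_conv by auto

section \<open>Lipschitz graphs over a hyperplane\<close>

definition grid_cell :: "'a::euclidean_space \<Rightarrow> real \<Rightarrow> real \<Rightarrow> ('a \<Rightarrow> nat) \<Rightarrow> 'a set" where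
  "grid_cell e R w k = {y. y \<bullet> e = 0 \<and>
     (\<forall>b\<in>Basis - {e}. - R + real (k b) * w \<le> y \<bullet> b \<and> y \<bullet> b \<le> - R + (real (k b) + 1) * w)}"

lemma grid_cell_cover:
  fixes y e :: "'a::euclidean_space"
  assumes "y \<bullet> e = 0" "norm y < R" "0 < w" "R \<le> real n * w"
  shows "\<exists>k \<in> Basis - {e} \<rightarrow>\<^sub>E {..<2 * n}. y \<in> grid_cell e R w k"
proof -
  define k where "k = restrict (\<lambda>b. nat \<lfloor>(y \<bullet> b + R) / w\<rfloor>) (Basis - {e})"
  have cell: "- R + real (k b) * w \<le> y \<bullet> b \<and> y \<bullet> b \<le> - R + (real (k b) + 1) * w \<and> k b < 2 * n"
    if b: "b \<in> Basis - {e}" for b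
  proof -
    have yb: "\<bar>y \<bullet> b\<bar> < R" using Basis_le_norm[of b y] b assms(2) by auto
    define t where "t = (y \<bullet> b + R) / w"
    have t0: "0 \<le> t" using yb \<open>0 < w\<close> by (simp add: t_def)
    have t2: "t < 2 * real n" using yb assms(3,4) by (simp add: t_def field_simps)
    have kt: "real (k b) = of_int \<lfloor>t\<rfloor>" using b t0 by (simp add: k_def t_def)
    have "of_int \<lfloor>t\<rfloor> * w \<le> t * w" "t * w \<le> (of_int \<lfloor>t\<rfloor> + 1) * w"
      using \<open>0 < w\<close> by (simp_all add: mult_right_mono)
    moreover have "t * w = y \<bullet> b + R" using \<open>0 < w\<close> by (simp add: t_def)
    moreover have "real (k b) < real (2 * n)" using kt t2 by linarith
    ultimately show ?thesis using kt by (simp only: of_nat_less_iff) linarith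
  qed
  have "k \<in> Basis - {e} \<rightarrow>\<^sub>E {..<2 * n}" using cell by (auto simp: k_def PiE_iff)
  moreover have "y \<in> grid_cell e R w k" using cell assms(1) by (simp add: grid_cell_def)
  ultimately show ?thesis by blast
qed

lemma grid_cell_norm_diff:
  fixes y z :: "'a::euclidean_space" and w :: real
  assumes "y \<in> grid_cell e R w k" "z \<in> grid_cell e R w k" "0 \<le> w"
  shows "norm (y - z) \<le> DIM('a) * w"
proof -
  have "\<bar>(y - z) \<bullet> b\<bar> \<le> w" if "b \<in> Basis" for b
  proof (cases "b = e")
    case False
    then have "b \<in> Basis - {e}" using that by blast
    then have "- R + real (k b) * w \<le> y \<bullet> b" "y \<bullet> b \<le> - R + (real (k b) + 1) * w"
      "- R + real (k b) * w \<le> z \<bullet> b" "z \<bullet> b \<le> - R + (real (k b) + 1) * w"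
      using assms(1,2) unfolding grid_cell_def by blast+
    then show ?thesis by (simp add: inner_diff_left abs_le_iff algebra_simps)
  qed (use assms in \<open>simp add: grid_cell_def inner_diff_left\<close>)
  then have "(\<Sum>b\<in>Basis. \<bar>(y - z) \<bullet> b\<bar>) \<le> (\<Sum>b\<in>(Basis::'a set). w)" by (rule sum_mono)
  then show ?thesis using norm_le_l1[of "y - z"] by simp
qed

text \<open>Finitely many \<open>L\<close>-Lipschitz images of a subset of the hyperplane orthogonal to
  \<open>e\<close>, with parameters of norm below \<open>R\<close>, have (N-1)-dimensional Hausdorff outer
  measure \<open>O(R^(N-1))\<close>: the images of the grid cells of side \<open>R/n\<close> form a fine cover.\<close>
lemma hausdorff_outer_lipschitz_graphs:
  fixes e :: "'a::euclidean_space" and F :: "nat \<Rightarrow> 'a \<Rightarrow> 'b::euclidean_space"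
  assumes e: "e \<in> Basis"
    and Lip: "\<And>j y z. j < m \<Longrightarrow> y \<in> \<Delta> \<Longrightarrow> z \<in> \<Delta> \<Longrightarrow> norm (F j y - F j z) \<le> L * norm (y - z)"
    and "0 \<le> L" and hyperplane: "\<And>y. y \<in> \<Delta> \<Longrightarrow> y \<bullet> e = 0" and "0 < R"
    and A: "A \<subseteq> {F j y | j y. j < m \<and> y \<in> \<Delta> \<and> norm y < R}"
  shows "hausdorff_outer (DIM('a) - 1) A
           \<le> ennreal (real m * (2 * L * DIM('a) * R) ^ (DIM('a) - 1) * hausdorff_const (DIM('a) - 1))"
proof (rule hausdorff_outer_le)
  fix \<delta> :: real assume \<delta>: "0 < \<delta>"
  let ?d = "DIM('a) - 1"
  define n :: nat where "n = nat \<lceil>L * DIM('a) * R / \<delta>\<rceil> + 1"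
  define w where "w = R / real n"
  have n: "1 \<le> real n" "L * DIM('a) * R / \<delta> \<le> real n"
    using real_nat_ceiling_ge[of "L * DIM('a) * R / \<delta>"] by (auto simp: n_def)
  have "0 < w" using \<open>0 < R\<close> n(1) by (simp add: w_def)
  have cell_small: "L * DIM('a) * w \<le> \<delta>"
    using n \<delta> by (simp add: w_def field_simps)
  define K where "K = Basis - {e} \<rightarrow>\<^sub>E {..<2 * n}"
  define I where "I = {..<m} \<times> K"
  define D where "D = (\<lambda>(j, k). F j ` (grid_cell e R w k \<inter> \<Delta>))"
  have "finite I" unfolding I_def K_def by (auto intro!: finite_PiE)
  have cover: "A \<subseteq> (\<Union>i\<in>I. D i)"
  proof
    fix x assume "x \<in> A"
    then obtain j y where jy: "x = F j y" "j < m" "y \<in> \<Delta>" "norm y < R" using A by blast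
    moreover obtain k where "k \<in> K" "y \<in> grid_cell e R w k"
      using grid_cell_cover[of y e R w n] hyperplane jy \<open>0 < w\<close> n(1) by (auto simp: K_def w_def)
    ultimately show "x \<in> (\<Union>i\<in>I. D i)" unfolding I_def D_def by force
  qed
  have D_norm_diff: "norm (p - q) \<le> L * DIM('a) * w" if iI: "i \<in> I" and pq: "p \<in> D i" "q \<in> D i" for i p q
  proof -
    obtain j k y z where jyz: "j < m" "p = F j y" "q = F j z"
      "y \<in> grid_cell e R w k \<inter> \<Delta>" "z \<in> grid_cell e R w k \<inter> \<Delta>"
      using iI pq by (auto simp: I_def D_def)
    then have "norm (p - q) \<le> L * norm (y - z)" using Lip by auto
    also have "\<dots> \<le> L * (DIM('a) * w)"
      using grid_cell_norm_diff[of y e R w k z] jyz \<open>0 < w\<close> \<open>0 \<le> L\<close> by (intro mult_left_mono) auto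
    finally show ?thesis by (simp add: mult.assoc)
  qed
  have D_diam: "diameter (D i) \<le> L * DIM('a) * w" if "i \<in> I" for i
    by (rule diameter_le) (use D_norm_diff[OF that] \<open>0 \<le> L\<close> \<open>0 < w\<close> in auto)
  have D_bounded: "bounded (D i)" if "i \<in> I" for i
  proof (cases "D i = {}")
    case False
    then obtain p where "p \<in> D i" by blast
    then have "D i \<subseteq> cball p (L * DIM('a) * w)" using D_norm_diff[OF that] by (auto simp: dist_norm)
    then show ?thesis using bounded_cball bounded_subset by blast
  qed simp
  have D_small: "bounded (D i) \<and> diameter (D i) \<le> \<delta>" if "i \<in> I" for i
    using D_bounded[OF that] D_diam[OF that] cell_small by linarith
  have "hausdorff_approx ?d \<delta> A \<le> ennreal (\<Sum>i\<in>I. hausdorff_const ?d * diameter (D i) ^ ?d)"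
    by (rule hausdorff_approx_finite_cover[OF \<open>finite I\<close> cover D_small less_imp_le[OF \<delta>]])
  also have "\<dots> \<le> ennreal (\<Sum>i\<in>I. hausdorff_const ?d * (L * DIM('a) * w) ^ ?d)"
    by (intro ennreal_leI sum_mono mult_left_mono hausdorff_const_nonneg power_mono D_diam
        diameter_ge_0 D_bounded)
  also have "(\<Sum>i\<in>I. hausdorff_const ?d * (L * DIM('a) * w) ^ ?d)
      = real m * (2 * L * DIM('a) * R) ^ ?d * hausdorff_const ?d"
  proof -
    have "card I = m * (2 * n) ^ ?d"
      using e by (simp add: I_def K_def card_cartesian_product card_PiE card_Diff_singleton)
    then have card: "real (card I) = real m * (2 * real n) ^ ?d" by simp
    have "(2 * real n) * (L * DIM('a) * w) = 2 * L * DIM('a) * R"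
      using n(1) by (simp add: w_def field_simps)
    then have pow: "(2 * real n) ^ ?d * (L * DIM('a) * w) ^ ?d = (2 * L * DIM('a) * R) ^ ?d"
      by (metis power_mult_distrib)
    have "(\<Sum>i\<in>I. hausdorff_const ?d * (L * DIM('a) * w) ^ ?d)
        = real m * ((2 * real n) ^ ?d * (L * DIM('a) * w) ^ ?d) * hausdorff_const ?d"
      by (simp add: card mult_ac)
    then show ?thesis by (simp only: pow)
  qed
  finally show "hausdorff_approx ?d \<delta> A
      \<le> ennreal (real m * (2 * L * DIM('a) * R) ^ ?d * hausdorff_const ?d)" .
qed

section \<open>The boundary of a domain satisfying Condition (D)\<close>

lemma condition_D_lipschitz_charts:
  fixes \<Omega> :: "'a::euclidean_space set"
  assumes "condition_D \<Omega>"
  obtains e :: 'a and L C :: real and \<Delta> :: "'a set" and m :: nat and F :: "nat \<Rightarrow> 'a \<Rightarrow> 'a"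
  where "e \<in> Basis" "0 \<le> L" "0 \<le> C" "\<And>y. y \<in> \<Delta> \<Longrightarrow> y \<bullet> e = 0"
    "\<And>j y z. j < m \<Longrightarrow> y \<in> \<Delta> \<Longrightarrow> z \<in> \<Delta> \<Longrightarrow> norm (F j y - F j z) \<le> L * norm (y - z)"
    "\<And>x. x \<in> frontier \<Omega> \<Longrightarrow> \<exists>j<m. \<exists>y\<in>\<Delta>. x = F j y \<and> norm y \<le> norm x + C"
proof -
  obtain m :: nat and c T and e :: 'a and lo hi a \<beta>
    where e: "e \<in> Basis" and "\<beta> > 0"
      and charts: "\<forall>r<m. orthogonal_transformation (T r)
        \<and> (\<exists>L. L-lipschitz_on (closure (base_box e lo hi)) (a r))
        \<and> {c r + T r (y + a r y *\<^sub>R e) | y. y \<in> base_box e lo hi} \<subseteq> frontier \<Omega>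
        \<and> {c r + T r (y + t *\<^sub>R e) | y t. y \<in> base_box e lo hi \<and> a r y < t \<and> t < a r y + \<beta>} \<subseteq> \<Omega>
        \<and> {c r + T r (y + t *\<^sub>R e) | y t. y \<in> base_box e lo hi \<and> a r y - \<beta> < t \<and> t < a r y}
            \<inter> closure \<Omega> = {}"
      and fr: "frontier \<Omega> = (\<Union>r<m. {c r + T r (y + a r y *\<^sub>R e) | y. y \<in> base_box e lo hi})"
    using assms unfolding condition_D_def by (elim exE bexE conjE) (rule that; assumption)
  define \<Delta> where "\<Delta> = base_box e lo hi"
  define F where "F j y = c j + T j (y + a j y *\<^sub>R e)" for j y
  have orth: "orthogonal_transformation (T r)" if "r < m" for r using charts that by simp
  have "\<forall>r\<in>{..<m}. \<exists>L. L-lipschitz_on (closure \<Delta>) (a r)"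
    using charts unfolding \<Delta>_def by simp
  then obtain Lf where Lf: "\<forall>r\<in>{..<m}. (Lf r)-lipschitz_on (closure \<Delta>) (a r)"
    by (rule bchoice[elim_format]) blast
  define L where "L = 1 + (\<Sum>r<m. \<bar>Lf r\<bar>)"
  define C where "C = (\<Sum>r<m. norm (c r))"
  have hyperplane: "y \<bullet> e = 0" if "y \<in> \<Delta>" for y using that by (simp add: \<Delta>_def base_box_def)
  have Lip: "norm (F j y - F j z) \<le> L * norm (y - z)" if j: "j < m" and yz: "y \<in> \<Delta>" "z \<in> \<Delta>" for j y z
  proof -
    have "F j y - F j z = T j ((y - z) + (a j y - a j z) *\<^sub>R e)"
      using orthogonal_transformation_linear[OF orth[OF j]]
      by (simp add: F_def linear_diff[symmetric] algebra_simps)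
    then have "norm (F j y - F j z) = norm ((y - z) + (a j y - a j z) *\<^sub>R e)"
      using orth[OF j] orthogonal_transformation_norm by metis
    also have "\<dots> \<le> norm (y - z) + \<bar>a j y - a j z\<bar>"
      using norm_triangle_ineq[of "y - z" "(a j y - a j z) *\<^sub>R e"] e by simp
    also have "\<bar>a j y - a j z\<bar> \<le> Lf j * norm (y - z)"
      using lipschitz_onD[of "Lf j" "closure \<Delta>" "a j" y z] Lf j yz closure_subset by (force simp: dist_norm)
    also have "Lf j \<le> \<bar>Lf j\<bar>" by simp
    also have "\<bar>Lf j\<bar> \<le> (\<Sum>r<m. \<bar>Lf r\<bar>)" using j by (intro member_le_sum) auto
    finally show ?thesis by (simp add: L_def algebra_simps mult_right_mono)
  qed
  have param: "\<exists>j<m. \<exists>y\<in>\<Delta>. x = F j y \<and> norm y \<le> norm x + C" if x: "x \<in> frontier \<Omega>" for x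
  proof -
    obtain j y where jy: "j < m" "y \<in> \<Delta>" "x = F j y" using x fr by (auto simp: F_def \<Delta>_def)
    have xc: "x - c j = T j (y + a j y *\<^sub>R e)" by (simp add: jy F_def)
    have "(norm (y + a j y *\<^sub>R e))\<^sup>2 = (norm y)\<^sup>2 + (norm (a j y *\<^sub>R e))\<^sup>2"
      by (rule norm_add_Pythagorean) (simp add: orthogonal_def hyperplane[OF jy(2)])
    then have "(norm y)\<^sup>2 \<le> (norm (y + a j y *\<^sub>R e))\<^sup>2" by simp
    then have "norm y \<le> norm (y + a j y *\<^sub>R e)" by (rule power2_le_imp_le) simp
    also have "\<dots> = norm (x - c j)"
      by (simp add: xc orthogonal_transformation_norm[OF orth[OF jy(1)]])
    also have "\<dots> \<le> norm x + norm (c j)" by (rule norm_triangle_ineq4)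
    also have "norm (c j) \<le> C" unfolding C_def using jy by (intro member_le_sum) auto
    finally show ?thesis using jy by auto
  qed
  show ?thesis
    by (rule that[OF e _ _ hyperplane Lip param]) (auto simp: L_def C_def sum_nonneg)
qed

lemma frontier_hausdorff_growth:
  fixes \<Omega> :: "'a::euclidean_space set"
  assumes "condition_D \<Omega>"
  obtains c1 c2 where "0 \<le> c1" "0 \<le> c2"
    "\<And>r A. 0 \<le> r \<Longrightarrow> A \<subseteq> frontier \<Omega> \<inter> cball 0 r \<Longrightarrow>
       hausdorff_outer (DIM('a) - 1) A \<le> ennreal (c1 * (r + c2) ^ (DIM('a) - 1))"
proof -
  obtain e L C and \<Delta> :: "'a set" and m :: nat and F
    where charts: "e \<in> Basis" "0 \<le> L" "0 \<le> C" "\<And>y. y \<in> \<Delta> \<Longrightarrow> y \<bullet> e = 0"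
    "\<And>j y z. j < m \<Longrightarrow> y \<in> \<Delta> \<Longrightarrow> z \<in> \<Delta> \<Longrightarrow> norm (F j y - F j z) \<le> L * norm (y - z)"
    and param: "\<And>x. x \<in> frontier \<Omega> \<Longrightarrow> \<exists>j<m. \<exists>y\<in>\<Delta>. x = F j y \<and> norm y \<le> norm x + C"
    by (rule condition_D_lipschitz_charts[OF assms]) (rule that; assumption)
  define c1 where "c1 = real m * (2 * L * DIM('a)) ^ (DIM('a) - 1) * hausdorff_const (DIM('a) - 1)"
  have "0 \<le> c1" using charts(2) by (simp add: c1_def hausdorff_const_nonneg)
  have bound: "hausdorff_outer (DIM('a) - 1) A \<le> ennreal (c1 * (r + (C + 1)) ^ (DIM('a) - 1))"
    if "0 \<le> r" and A: "A \<subseteq> frontier \<Omega> \<inter> cball 0 r" for r A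
  proof -
    have "A \<subseteq> {F j y | j y. j < m \<and> y \<in> \<Delta> \<and> norm y < r + C + 1}"
    proof
      fix x assume "x \<in> A"
      then have "x \<in> frontier \<Omega>" "norm x \<le> r" using A by auto
      moreover from param[OF this(1)] obtain j y
        where "j < m" "y \<in> \<Delta>" "x = F j y" "norm y \<le> norm x + C" by blast
      ultimately show "x \<in> {F j y | j y. j < m \<and> y \<in> \<Delta> \<and> norm y < r + C + 1}"
        by fastforce
    qed
    moreover have "0 < r + C + 1" using \<open>0 \<le> r\<close> charts(3) by linarith
    ultimately have "hausdorff_outer (DIM('a) - 1) A
        \<le> ennreal (real m * (2 * L * DIM('a) * (r + C + 1)) ^ (DIM('a) - 1) * hausdorff_const (DIM('a) - 1))"
      by (intro hausdorff_outer_lipschitz_graphs[OF charts(1) charts(5) charts(2) charts(4)])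
    also have "\<dots> = ennreal (c1 * (r + (C + 1)) ^ (DIM('a) - 1))"
      by (simp only: c1_def power_mult_distrib add.assoc mult_ac)
    finally show ?thesis .
  qed
  have "0 \<le> C + 1" using charts(3) by linarith
  then show ?thesis using that[OF \<open>0 \<le> c1\<close> _ bound] by blast
qed

section \<open>Gaussian weights against measures of polynomial growth\<close>

lemma pow_le_exp:
  assumes "0 \<le> (x::real)"
  shows "x ^ d \<le> (real d + 1) ^ d * exp x"
proof -
  define c where "c = real d + 1"
  have c: "1 \<le> c" by (simp add: c_def)
  have "x \<le> c * (1 + x / c)" using c by (simp add: field_simps)
  also have "\<dots> \<le> c * exp (x / c)" using c by (intro mult_left_mono) auto
  finally have "x ^ d \<le> (c * exp (x / c)) ^ d" using assms by (intro power_mono) auto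
  also have "\<dots> = c ^ d * exp (real d * (x / c))" by (simp only: power_mult_distrib exp_of_nat_mult)
  also have "exp (real d * (x / c)) \<le> exp x"
    using assms c by (simp add: c_def field_simps)
  finally show ?thesis using c by (simp add: c_def mult_left_mono)
qed

lemma exp_layer:
  fixes v A :: real
  assumes "0 < v" "v \<le> A"
  obtains k :: nat where "A * exp (- 2 * real (Suc k)) < v" "v \<le> A * exp (- 2 * real k)"
proof
  define t where "t = ln (A / v) / 2"
  have "0 \<le> t" using assms by (simp add: t_def)
  define k where "k = nat \<lfloor>t\<rfloor>"
  have kt: "real k \<le> t" "t < real k + 1" using \<open>0 \<le> t\<close> unfolding k_def by linarith+
  have A: "A = v * exp (2 * t)" using assms by (simp add: t_def)
  have layer: "A * exp (- 2 * real j) = v * exp (2 * t - 2 * real j)" for j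
    by (simp add: A exp_diff exp_minus field_simps)
  have "exp (2 * t - 2 * real (Suc k)) < 1" "1 \<le> exp (2 * t - 2 * real k)" using kt by simp_all
  then show "A * exp (- 2 * real (Suc k)) < v" "v \<le> A * exp (- 2 * real k)"
    unfolding layer using \<open>0 < v\<close> by simp_all
qed

lemma gaussian_layer_radius:
  fixes x :: "'a::real_normed_vector"
  assumes "A * exp (- 2 * real (Suc k)) < A * exp (- (norm x)\<^sup>2 / 2)" "0 \<le> A"
  shows "norm x \<le> real k + 2"
proof -
  have "exp (- 2 * real (Suc k)) < exp (- (norm x)\<^sup>2 / 2)"
    using mult_left_less_imp_less[OF assms] .
  then have "(norm x)\<^sup>2 < 4 * real k + 4" by simp
  also have "\<dots> \<le> (real k + 2)\<^sup>2" by (simp add: power2_eq_square algebra_simps)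
  finally have "(norm x)\<^sup>2 < (real k + 2)\<^sup>2" .
  then show ?thesis using power2_less_imp_less[of "norm x" "real k + 2"] by simp
qed

lemma layer_weight_le:
  assumes "0 \<le> c1" "0 \<le> c2"
  shows "exp (- 2 * real k) * (c1 * (real k + 2 + c2) ^ d)
           \<le> c1 * (real d + 1) ^ d * exp (2 + c2) * exp (-1) ^ k"
proof -
  have exp_eq: "exp (- 2 * real k) * exp (real k + 2 + c2) = exp (2 + c2) * exp (-1) ^ k"
  proof -
    have "exp (- 2 * real k) * exp (real k + 2 + c2) = exp (- 2 * real k + (real k + 2 + c2))"
      by (rule exp_add[symmetric])
    also have "- 2 * real k + (real k + 2 + c2) = (2 + c2) + real k * (-1)" by simp
    also have "exp \<dots> = exp (2 + c2) * exp (-1) ^ k"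
      by (simp only: exp_add exp_of_nat_mult)
    finally show ?thesis .
  qed
  have "(real k + 2 + c2) ^ d \<le> (real d + 1) ^ d * exp (real k + 2 + c2)"
    using assms by (intro pow_le_exp) simp
  then have "exp (- 2 * real k) * (c1 * (real k + 2 + c2) ^ d)
      \<le> exp (- 2 * real k) * (c1 * ((real d + 1) ^ d * exp (real k + 2 + c2)))"
    using assms by (intro mult_left_mono) auto
  also have "\<dots> = c1 * (real d + 1) ^ d * (exp (- 2 * real k) * exp (real k + 2 + c2))"
    by (simp only: mult_ac)
  also have "\<dots> = c1 * (real d + 1) ^ d * exp (2 + c2) * exp (-1) ^ k"
    by (simp only: exp_eq mult.assoc)
  finally show ?thesis .
qed

lemma ennreal_term_le_suminf: "f k \<le> (\<Sum>j. f j :: ennreal)"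
  using sum_le_suminf[of f "{k}"] by (simp add: summableI)

text \<open>The layer \<open>E k\<close>, where the function lies between
  \<open>a (k+1)\<close> and \<open>a k = A exp (-2k)\<close>, is measurable and lies in the ball of radius \<open>k + 2\<close>.\<close>
lemma integral_below_gaussian:
  fixes M :: "'a::real_normed_vector measure"
  assumes growth: "\<And>r E. 0 \<le> r \<Longrightarrow> E \<in> sets M \<Longrightarrow> E \<subseteq> S \<inter> cball 0 r \<Longrightarrow>
        emeasure M E \<le> ennreal (c1 * (r + c2) ^ d)"
    and "0 \<le> c1" "0 \<le> c2" "0 \<le> A"
    and g [measurable]: "g \<in> borel_measurable M"
    and below: "\<And>x. g x \<le> ennreal (A * exp (- (norm x)\<^sup>2 / 2)) * indicator S x"
  shows "integral\<^sup>N M g \<le> ennreal (A * (c1 * (real d + 1) ^ d * exp (2 + c2) / (1 - exp (-1))))"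
proof -
  define c3 where "c3 = c1 * (real d + 1) ^ d * exp (2 + c2)"
  define q :: real where "q = exp (-1)"
  define a where "a k = A * exp (- 2 * real k)" for k :: nat
  define E where "E k = {x \<in> space M. ennreal (a (Suc k)) < g x \<and> g x \<le> ennreal (a k)}" for k
  have a_nonneg: "0 \<le> a k" for k using \<open>0 \<le> A\<close> by (simp add: a_def)
  have E_sets [measurable]: "E k \<in> sets M" for k unfolding E_def by measurable
  have support: "x \<in> S \<and> g x \<le> ennreal (A * exp (- (norm x)\<^sup>2 / 2))" if "0 < g x" for x
    using below[of x] that by (cases "x \<in> S") auto
  have decomp: "g x \<le> (\<Sum>k. ennreal (a k) * indicator (E k) x)" if x: "x \<in> space M" for x
  proof (cases "g x = 0")
    case False
    then have "0 < g x" by (simp add: zero_less_iff_neq_zero)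
    have "A * exp (- (norm x)\<^sup>2 / 2) \<le> A" using \<open>0 \<le> A\<close> by (simp add: mult_left_le)
    then have "g x \<le> ennreal A" using support[OF \<open>0 < g x\<close>] ennreal_leI order_trans by blast
    then obtain v where v: "g x = ennreal v" "0 \<le> v" "v \<le> A" using le_ennreal_iff \<open>0 \<le> A\<close> by blast
    then have "0 < v" using \<open>0 < g x\<close> by (auto simp: ennreal_less_zero_iff)
    then obtain k where k: "a (Suc k) < v" "v \<le> a k" using exp_layer[OF _ \<open>v \<le> A\<close>] a_def by metis
    then have "x \<in> E k" using x v a_nonneg by (simp add: E_def ennreal_less_iff)
    then have "g x \<le> ennreal (a k) * indicator (E k) x" using v k by simp
    also have "\<dots> \<le> (\<Sum>j. ennreal (a j) * indicator (E j) x)"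
      by (rule ennreal_term_le_suminf[of "\<lambda>j. ennreal (a j) * indicator (E j) x"])
    finally show ?thesis .
  qed simp
  have E_ball: "E k \<subseteq> S \<inter> cball 0 (real k + 2)" for k
  proof
    fix x assume "x \<in> E k"
    then have less: "ennreal (a (Suc k)) < g x" by (simp add: E_def)
    then have "0 < g x" by (rule le_less_trans[OF zero_le])
    with less have "ennreal (a (Suc k)) < ennreal (A * exp (- (norm x)\<^sup>2 / 2))"
      using support by (blast intro: less_le_trans)
    then have "a (Suc k) < A * exp (- (norm x)\<^sup>2 / 2)"
      using ennreal_less_iff[OF a_nonneg[of "Suc k"]] by blast
    then have "A * exp (- 2 * real (Suc k)) < A * exp (- (norm x)\<^sup>2 / 2)"
      by (simp only: a_def)
    then show "x \<in> S \<inter> cball 0 (real k + 2)"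
      using gaussian_layer_radius \<open>0 \<le> A\<close> support[OF \<open>0 < g x\<close>] by auto
  qed
  have layer: "ennreal (a k) * emeasure M (E k) \<le> ennreal (A * (c3 * q ^ k))" for k
  proof -
    have "emeasure M (E k) \<le> ennreal (c1 * (real k + 2 + c2) ^ d)"
      using growth[OF _ E_sets E_ball] by simp
    then have "ennreal (a k) * emeasure M (E k) \<le> ennreal (a k) * ennreal (c1 * (real k + 2 + c2) ^ d)"
      by (rule mult_left_mono) simp
    also have "\<dots> = ennreal (A * (exp (- 2 * real k) * (c1 * (real k + 2 + c2) ^ d)))"
      using a_nonneg \<open>0 \<le> c1\<close> \<open>0 \<le> c2\<close> by (simp add: a_def ennreal_mult[symmetric] mult.assoc)
    also have "\<dots> \<le> ennreal (A * (c3 * q ^ k))"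
      using layer_weight_le[OF \<open>0 \<le> c1\<close> \<open>0 \<le> c2\<close>] \<open>0 \<le> A\<close>
      by (intro ennreal_leI mult_left_mono) (simp_all add: c3_def q_def)
    finally show ?thesis .
  qed
  have "(\<lambda>k. A * (c3 * q ^ k)) sums (A * (c3 / (1 - q)))"
    using sums_mult[OF sums_mult[OF geometric_sums, of q c3], of A] by (simp add: q_def)
  then have sums: "(\<lambda>k. ennreal (A * (c3 * q ^ k))) sums ennreal (A * (c3 / (1 - q)))"
    using \<open>0 \<le> A\<close> \<open>0 \<le> c1\<close> by (simp add: c3_def q_def)
  have "integral\<^sup>N M g \<le> (\<integral>\<^sup>+ x. (\<Sum>k. ennreal (a k) * indicator (E k) x) \<partial>M)"
    by (intro nn_integral_mono decomp)
  also have "\<dots> = (\<Sum>k. ennreal (a k) * emeasure M (E k))"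
    by (simp add: nn_integral_suminf nn_integral_cmult_indicator)
  also have "\<dots> \<le> (\<Sum>k. ennreal (A * (c3 * q ^ k)))"
    by (intro suminf_le layer summableI)
  also have "\<dots> = ennreal (A * (c3 / (1 - q)))" using sums by (rule sums_unique[symmetric])
  finally show ?thesis by (simp add: c3_def q_def)
qed

text \<open>Hence the integral of the Gaussian weight over \<open>S\<close> is finite, with an explicit bound;
  the integrand need not be measurable, so we pass through its simple minorants.\<close>
lemma gaussian_integral_polynomial_growth:
  fixes M :: "'a::real_normed_vector measure"
  assumes growth: "\<And>r E. 0 \<le> r \<Longrightarrow> E \<in> sets M \<Longrightarrow> E \<subseteq> S \<inter> cball 0 r \<Longrightarrow>
        emeasure M E \<le> ennreal (c1 * (r + c2) ^ d)"
    and "0 \<le> c1" "0 \<le> c2" "0 \<le> A"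
  shows "(\<integral>\<^sup>+ x \<in> S. ennreal (A * exp (- (norm x)\<^sup>2 / 2)) \<partial>M)
           \<le> ennreal (A * (c1 * (real d + 1) ^ d * exp (2 + c2) / (1 - exp (-1))))"
  unfolding nn_integral_def
proof (rule SUP_least, safe)
  fix g assume g: "simple_function M g" "g \<le> (\<lambda>x. ennreal (A * exp (- (norm x)\<^sup>2 / 2)) * indicator S x)"
  then have "integral\<^sup>N M g \<le> ennreal (A * (c1 * (real d + 1) ^ d * exp (2 + c2) / (1 - exp (-1))))"
    by (intro integral_below_gaussian[OF growth \<open>0 \<le> c1\<close> \<open>0 \<le> c2\<close> \<open>0 \<le> A\<close>])
       (auto simp: le_fun_def borel_measurable_simple_function)
  then show "integral\<^sup>S M g \<le> ennreal (A * (c1 * (real d + 1) ^ d * exp (2 + c2) / (1 - exp (-1))))"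
    using nn_integral_eq_simple_integral[OF g(1)] by simp
qed

lemma frontier_gaussian_integral_bound:
  fixes \<Omega> :: "'a::euclidean_space set"
  assumes "condition_D \<Omega>"
  obtains B where "0 \<le> B"
    "\<And>A. 0 \<le> A \<Longrightarrow> (\<integral>\<^sup>+ x \<in> frontier \<Omega>. ennreal (A * exp (- (norm x)\<^sup>2 / 2))
        \<partial>hausdorff_measure (DIM('a) - 1)) \<le> ennreal (A * B)"
proof -
  obtain c1 c2 where c: "0 \<le> c1" "0 \<le> c2" and growth: "\<And>r E. 0 \<le> r \<Longrightarrow> E \<subseteq> frontier \<Omega> \<inter> cball 0 r
      \<Longrightarrow> hausdorff_outer (DIM('a) - 1) E \<le> ennreal (c1 * (r + c2) ^ (DIM('a) - 1))"
    using frontier_hausdorff_growth[OF assms] by blast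
  have "emeasure (hausdorff_measure (DIM('a) - 1)) E \<le> ennreal (c1 * (r + c2) ^ (DIM('a) - 1))"
    if "0 \<le> r" "E \<subseteq> frontier \<Omega> \<inter> cball 0 r" for r E
    using emeasure_hausdorff_le_outer growth[OF that] order_trans by blast
  note gauss = gaussian_integral_polynomial_growth[OF this c]
  show ?thesis
    by (rule that[OF _ gauss]) (use c in auto)
qed

section \<open>Functions on the closure vanishing at infinity\<close>

lemma smooth_on_closure_continuous:
  assumes "smooth_on_closure \<Omega> u"
  shows "continuous_on (closure \<Omega>) u"
proof -
  obtain U where U: "closure \<Omega> \<subseteq> U" "smooth_on U u"
    using assms by (auto simp: smooth_on_closure_def)
  then have "C_k_on 0 U u" by (simp add: smooth_on_def)
  then show ?thesis using U(1) continuous_on_subset by auto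
qed

text \<open>A function continuous on the closure of \<open>S\<close> and tending to zero at infinity along
  \<open>S\<close> is bounded on \<open>S\<close>: outside a large ball it is below 1, inside it is bounded by
  compactness.\<close>
lemma bounded_if_vanishing_at_infinity:
  fixes S :: "'a::{real_normed_vector, heine_borel} set" and u :: "'a \<Rightarrow> real"
  assumes cont: "continuous_on (closure S) u"
    and vanish: "\<forall>\<epsilon>>0. \<exists>R. \<forall>x\<in>S. norm x > R \<longrightarrow> \<bar>u x\<bar> < \<epsilon>"
  shows "bdd_above ((\<lambda>x. \<bar>u x\<bar>) ` S)"
proof -
  obtain R where R: "\<forall>x\<in>S. norm x > R \<longrightarrow> \<bar>u x\<bar> < 1" using vanish zero_less_one by blast
  have "compact (u ` (closure S \<inter> cball 0 R))"
    using continuous_on_subset[OF cont, of "closure S \<inter> cball 0 R"]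
    by (intro compact_continuous_image closed_Int_compact) auto
  then obtain B where B: "\<forall>y\<in>u ` (closure S \<inter> cball 0 R). norm y \<le> B"
    using compact_imp_bounded bounded_iff by metis
  have "\<bar>u x\<bar> \<le> max 1 B" if "x \<in> S" for x
  proof (cases "norm x > R")
    case True
    then show ?thesis using R that by fastforce
  next
    case False
    then have "x \<in> closure S \<inter> cball 0 R" using that closure_subset by auto
    then have "norm (u x) \<le> B" using B by blast
    then show ?thesis by simp
  qed
  then show ?thesis by (intro bdd_aboveI2)
qed

lemma abs_le_Sup_on_closure:
  fixes S :: "'a::metric_space set" and u :: "'a \<Rightarrow> real"
  assumes cont: "continuous_on (closure S) u" and bdd: "bdd_above ((\<lambda>x. \<bar>u x\<bar>) ` S)"
    and "x \<in> closure S"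
  shows "\<bar>u x\<bar> \<le> (SUP y\<in>S. \<bar>u y\<bar>)"
  using continuous_le_on_closure[OF continuous_on_rabs[OF cont] \<open>x \<in> closure S\<close>]
    cSUP_upper[OF _ bdd] by blast

text \<open>The normalising factor \<open>(2\<pi>)^(-N/2)\<close> of the Gaussian density is at most 1.\<close>
lemma gauss_density_le: "gauss_density (x::'a::euclidean_space) \<le> exp (- (norm x)\<^sup>2 / 2)"
proof -
  have "1 \<le> (2 * pi) powr (real DIM('a) / 2)" using pi_gt3 by (intro ge_one_powr_ge_zero) auto
  then have "(2 * pi) powr (- real DIM('a) / 2) \<le> 1"
    using powr_minus_divide[of "2 * pi" "real DIM('a) / 2"] by (simp add: divide_le_eq)
  then show ?thesis unfolding gauss_density_def
    using mult_right_mono[of "(2 * pi) powr (- real DIM('a) / 2)" 1 "exp (- (norm x)\<^sup>2 / 2)"] by simp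
qed

lemma weighted_integral_le_gaussian:
  fixes F :: "'a::euclidean_space set" and \<mu> :: "'a measure"
  assumes gauss: "\<And>A. 0 \<le> A \<Longrightarrow> (\<integral>\<^sup>+ x \<in> F. ennreal (A * exp (- (norm x)\<^sup>2 / 2)) \<partial>\<mu>) \<le> ennreal (A * B)"
    and bound: "\<And>x. x \<in> F \<Longrightarrow> \<bar>u x\<bar> \<le> M" and "0 \<le> lam"
  shows "(\<integral>\<^sup>+ x \<in> F. ennreal (exp (lam * (u x)\<^sup>2) * gauss_density x) \<partial>\<mu>)
           \<le> ennreal (exp (lam * M\<^sup>2) * B)"
proof -
  have pointwise: "exp (lam * (u x)\<^sup>2) * gauss_density x \<le> exp (lam * M\<^sup>2) * exp (- (norm x)\<^sup>2 / 2)"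
    if "x \<in> F" for x
  proof -
    have "(u x)\<^sup>2 \<le> M\<^sup>2" using bound[OF that] by (metis abs_le_square_iff abs_of_nonneg abs_ge_zero order_trans)
    then have "exp (lam * (u x)\<^sup>2) \<le> exp (lam * M\<^sup>2)" using \<open>0 \<le> lam\<close> by (simp add: mult_left_mono)
    moreover have "0 \<le> gauss_density x" by (simp add: gauss_density_def)
    ultimately show ?thesis using gauss_density_le[of x] by (intro mult_mono) auto
  qed
  have "(\<integral>\<^sup>+ x \<in> F. ennreal (exp (lam * (u x)\<^sup>2) * gauss_density x) \<partial>\<mu>)
      \<le> (\<integral>\<^sup>+ x \<in> F. ennreal (exp (lam * M\<^sup>2) * exp (- (norm x)\<^sup>2 / 2)) \<partial>\<mu>)"
    using pointwise by (intro nn_integral_mono) (auto split: split_indicator intro!: ennreal_leI)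
  also have "\<dots> \<le> ennreal (exp (lam * M\<^sup>2) * B)" by (rule gauss) simp
  finally show ?thesis .
qed

lemma constant_bound_le_rhs:
  fixes G M B lam :: real
  assumes "0 \<le> G" "0 \<le> M" "0 \<le> B" "0 \<le> lam" "lam \<le> 1"
  shows "exp (lam * M\<^sup>2) * B \<le> (B + 1) * exp ((G + M)\<^sup>2) * (G * (G + M) + 1)"
proof -
  have "lam * M\<^sup>2 \<le> M\<^sup>2" using assms(4,5) by (simp add: mult_left_le_one_le)
  also have "\<dots> \<le> (G + M)\<^sup>2" using assms(1,2) by (intro power_mono) auto
  finally have "exp (lam * M\<^sup>2) \<le> exp ((G + M)\<^sup>2)" by simp
  then have "exp (lam * M\<^sup>2) * B \<le> exp ((G + M)\<^sup>2) * (B + 1)" using assms(3) by (intro mult_mono) auto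
  also have "\<dots> \<le> exp ((G + M)\<^sup>2) * (B + 1) * (G * (G + M) + 1)"
  proof -
    have "1 \<le> G * (G + M) + 1" using assms(1,2) by simp
    then show ?thesis using mult_left_mono[of 1 _ "exp ((G + M)\<^sup>2) * (B + 1)"] assms(3) by simp
  qed
  finally show ?thesis by (simp add: mult_ac)
qed

theorem proposition4p2:
  fixes \<Omega> :: "'a::euclidean_space set" and lam :: real
  assumes "domain \<Omega>" and "condition_D \<Omega>"
    and "0 < lam" and "lam < 1"
  shows "\<exists>C>0. \<forall>u :: 'a \<Rightarrow> real.
     smooth_on_closure \<Omega> u
     \<longrightarrow> (\<forall>\<epsilon>>0. \<exists>R. \<forall>x\<in>\<Omega>. norm x > R \<longrightarrow> \<bar>u x\<bar> < \<epsilon>)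
     \<longrightarrow> bdd_above ((\<lambda>x. norm (grad u x)) ` \<Omega>)
     \<longrightarrow> (let G = (SUP x\<in>\<Omega>. norm (grad u x)); M = (SUP x\<in>\<Omega>. \<bar>u x\<bar>) in
          (\<integral>\<^sup>+ x \<in> frontier \<Omega>. ennreal (exp (lam * (u x)\<^sup>2) * gauss_density x)
              \<partial>hausdorff_measure (DIM('a) - 1))
          \<le> ennreal (C * exp ((G + M)\<^sup>2) * (G * (G + M) + 1)))"
proof -
  obtain B where "0 \<le> B" and gauss: "\<And>A. 0 \<le> A \<Longrightarrow>
      (\<integral>\<^sup>+ x \<in> frontier \<Omega>. ennreal (A * exp (- (norm x)\<^sup>2 / 2)) \<partial>hausdorff_measure (DIM('a) - 1))
        \<le> ennreal (A * B)"
    using frontier_gaussian_integral_bound[OF assms(2)] by blast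
  obtain x0 where "x0 \<in> \<Omega>" using assms(1) by (auto simp: domain_def)
  show ?thesis
  proof (intro exI[of _ "B + 1"] conjI allI impI)
    fix u :: "'a \<Rightarrow> real"
    assume smooth: "smooth_on_closure \<Omega> u"
      and vanish: "\<forall>\<epsilon>>0. \<exists>R. \<forall>x\<in>\<Omega>. norm x > R \<longrightarrow> \<bar>u x\<bar> < \<epsilon>"
      and bdd_grad: "bdd_above ((\<lambda>x. norm (grad u x)) ` \<Omega>)"
    define G where "G = (SUP x\<in>\<Omega>. norm (grad u x))"
    define M where "M = (SUP x\<in>\<Omega>. \<bar>u x\<bar>)"
    note cont = smooth_on_closure_continuous[OF smooth]
    note u_le_M = abs_le_Sup_on_closure[OF cont bounded_if_vanishing_at_infinity[OF cont vanish],
        folded M_def]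
    have "0 \<le> M" using u_le_M[of x0] \<open>x0 \<in> \<Omega>\<close> closure_subset by fastforce
    have "0 \<le> G" unfolding G_def using bdd_grad \<open>x0 \<in> \<Omega>\<close> by (intro cSUP_upper2[of _ _ x0]) auto
    have "(\<integral>\<^sup>+ x \<in> frontier \<Omega>. ennreal (exp (lam * (u x)\<^sup>2) * gauss_density x)
            \<partial>hausdorff_measure (DIM('a) - 1)) \<le> ennreal (exp (lam * M\<^sup>2) * B)"
      using u_le_M \<open>0 < lam\<close> by (intro weighted_integral_le_gaussian[OF gauss]) (auto simp: frontier_def)
    also have "\<dots> \<le> ennreal ((B + 1) * exp ((G + M)\<^sup>2) * (G * (G + M) + 1))"
      using constant_bound_le_rhs \<open>0 \<le> G\<close> \<open>0 \<le> M\<close> \<open>0 \<le> B\<close> assms(3,4) by (intro ennreal_leI) auto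
    finally show "let G = (SUP x\<in>\<Omega>. norm (grad u x)); M = (SUP x\<in>\<Omega>. \<bar>u x\<bar>) in
          (\<integral>\<^sup>+ x \<in> frontier \<Omega>. ennreal (exp (lam * (u x)\<^sup>2) * gauss_density x)
              \<partial>hausdorff_measure (DIM('a) - 1))
          \<le> ennreal ((B + 1) * exp ((G + M)\<^sup>2) * (G * (G + M) + 1))"
      by (simp only: Let_def G_def M_def)
  qed (use \<open>0 \<le> B\<close> in simp)
qed

end
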